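(* Let $(x,y)$ and $(x',y')$ be $\mathbf{x}$-vertices of $R$. If $ax'\in\operatorname{Band}_{\mathbf{x}}(y)$, then \[ d_R((x,y),(x',y'))\le d(P_A)+2d(\bar A)+d(\bar B)+2. \]
   Context: Let $A\in\mathbb{R}^{m_1\times n_1}$, nonzero $a\in\mathbb{R}^{1\times n_1}$, nonzero $b\in\mathbb{R}^{1\times n_2}$, $B\in\mathbb{R}^{m_2\times n_2}$, $c_A\in\mathbb{R}^{m_1}$, $c_B\in\mathbb{R}^{m_2}$, $c_a,c_b\in\mathbb{R}$, and $R=\{(x,y)\in\mathbb{R}^{n_1}\times\mathbb{R}^{n_2}: Ax=c_A,\ ax+by=c_a+c_b,\ By=c_B,\ x,y\ge 0\}$. Assume $R$ is simple (nondegenerate). Let $P_A=\{x: Ax=c_A, x\ge 0\}$, $\bar A=\begin{bmatrix}A\\ a\end{bmatrix}$, $\bar B=\begin{bmatrix}b\\ B\end{bmatrix}$. A vertex $(x,y)$ of $R$ is an $\mathbf{x}$-vertex if $x$ is a vertex of $P_A$; for such a vertex, $\operatorname{Band}_{\mathbf{x}}(y):=\{c_a+c_b-bz : Bz=c_B,\ \operatorname{supp}(z)\subseteq\operatorname{supp}(y),\ z\ge 0\}$, where $\operatorname{supp}$ is the set of indices of nonzero coordinates. $d_R(v,w)$ is the minimum number of edges of an edge walk in $R$ from $v$ to $w$. For a polyhedron $P$, $d(P)$ is its combinatorial diameter, and for a matrix $M\in\mathbb{R}^{m\times n}$, $d(M):=\max\{d(\{z: Mz=r, z\ge 0\}): r\in\mathbb{R}^m\}$.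 *)

theory Defs
  imports "HOL-Analysis.Analysis" "HOL-Library.Extended_Nat"
begin

definition vertex_of :: "'a::euclidean_space \<Rightarrow> 'a set \<Rightarrow> bool" where
  "vertex_of v P \<longleftrightarrow> v extreme_point_of P"

definition adjacent_in :: "'a::euclidean_space set \<Rightarrow> 'a \<Rightarrow> 'a \<Rightarrow> bool" where
  "adjacent_in P v w \<longleftrightarrow> vertex_of v P \<and> vertex_of w P \<and> v \<noteq> w
      \<and> closed_segment v w edge_of P"

definition edge_walk :: "'a::euclidean_space set \<Rightarrow> nat \<Rightarrow> 'a \<Rightarrow> 'a \<Rightarrow> bool" where
  "edge_walk P k v w \<longleftrightarrow> (\<exists>p :: nat \<Rightarrow> 'a. p 0 = v \<and> p k = w \<and> vertex_of v P
      \<and> (\<forall>i<k. adjacent_in P (p i) (p (Suc i))))"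

definition edge_dist :: "'a::euclidean_space set \<Rightarrow> 'a \<Rightarrow> 'a \<Rightarrow> enat" where
  "edge_dist P v w = (INF k \<in> {k. edge_walk P k v w}. enat k)"

definition comb_diam :: "'a::euclidean_space set \<Rightarrow> enat" where
  "comb_diam P = (SUP v \<in> {v. vertex_of v P}. SUP w \<in> {w. vertex_of w P}. edge_dist P v w)"

definition nonneg :: "real ^ 'n \<Rightarrow> bool" where
  "nonneg z \<longleftrightarrow> (\<forall>i. 0 \<le> z $ i)"

definition supp :: "real ^ 'n \<Rightarrow> 'n set" where
  "supp z = {i. z $ i \<noteq> 0}"

definition std_poly :: "real ^ 'n ^ 'm \<Rightarrow> real ^ 'm \<Rightarrow> (real ^ 'n) set" where
  "std_poly M r = {z. M *v z = r \<and> nonneg z}"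

definition mat_diam :: "real ^ 'n ^ 'm \<Rightarrow> enat" where
  "mat_diam M = (SUP r. comb_diam (std_poly M r))"

text \<open>Used for Abar = [A; a] and Bbar = [b; B]; the order of rows
  does not affect the polyhedra {z : M z = r, z >= 0} as r ranges over all vectors.\<close>
definition stack_row :: "real ^ 'n ^ 'm \<Rightarrow> real ^ 'n \<Rightarrow> real ^ 'n ^ ('m option)" where
  "stack_row M c = (\<chi> i. case i of None \<Rightarrow> c | Some j \<Rightarrow> M $ j)"

definition simple_polyhedron :: "'a::euclidean_space set \<Rightarrow> bool" where
  "simple_polyhedron P \<longleftrightarrow> polyhedron P \<and>
     (\<forall>v. vertex_of v P \<longrightarrow> card {F. F facet_of P \<and> v \<in> F} = nat (aff_dim P))"

definition Rpoly :: "real ^ 'n1 ^ 'm1 \<Rightarrow> real ^ 'n1 \<Rightarrow> real ^ 'n2 \<Rightarrow> real ^ 'n2 ^ 'm2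
    \<Rightarrow> real ^ 'm1 \<Rightarrow> real ^ 'm2 \<Rightarrow> real \<Rightarrow> real \<Rightarrow> ((real ^ 'n1) \<times> (real ^ 'n2)) set" where
  "Rpoly A a b B cA cB ca cb = {(x, y). A *v x = cA \<and> a \<bullet> x + b \<bullet> y = ca + cb
      \<and> B *v y = cB \<and> nonneg x \<and> nonneg y}"

definition x_vertex :: "((real ^ 'n1) \<times> (real ^ 'n2)) set \<Rightarrow> real ^ 'n1 ^ 'm1 \<Rightarrow> real ^ 'm1
    \<Rightarrow> (real ^ 'n1) \<times> (real ^ 'n2) \<Rightarrow> bool" where
  "x_vertex R A cA v \<longleftrightarrow> vertex_of v R \<and> vertex_of (fst v) (std_poly A cA)"

definition Band_x :: "real ^ 'n2 \<Rightarrow> real ^ 'n2 ^ 'm2 \<Rightarrow> real ^ 'm2 \<Rightarrow> real \<Rightarrow> real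
    \<Rightarrow> real ^ 'n2 \<Rightarrow> real set" where
  "Band_x b B cB ca cb y = {ca + cb - b \<bullet> z | z. B *v z = cB \<and> supp z \<subseteq> supp y \<and> nonneg z}"

end

theory Submission
  imports Defs
begin

(* Let H be the face of R on which the y-part stays supported in supp y.  Since (x, y) is a
   vertex, projecting H to the x-part is injective, and its image is the slab
   S = {u in P_A. a u in Band_x(y)}, where Band_x(y) is a closed interval; the hypothesis says
   that x' lies in S.  A shortest edge walk from x to x' in P_A is rerouted through S: whenever
   it leaves S above (below), the detour is replaced by a walk inside the top (bottom) level
   {u in P_A. a u = g} of S.  Such a level is a polyhedron {Abar z = r, z >= 0}, so of diameter at
   most d(Abar), and each of the two levels has to be used only once.  Lifting to H gives at
   most d(P_A) + 2 d(Abar) edges from (x, y) to a vertex (x', z) of R.  Finally, the face of R on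
   which the x-part is supported in supp x' is {x'} x {w : Bbar w = (c_a + c_b - a x'; c_B),
   w >= 0}, so (x', z) and (x', y') are at most d(Bbar) edges apart. *)

section \<open>Vertices, edges and edge distance\<close>

lemma vertex_of_in: "vertex_of v P \<Longrightarrow> v \<in> P"
  by (simp add: vertex_of_def extreme_point_of_def)

lemma vertex_of_subset: "vertex_of v P \<Longrightarrow> v \<in> S \<Longrightarrow> S \<subseteq> P \<Longrightarrow> vertex_of v S"
  unfolding vertex_of_def extreme_point_of_def by blast

lemma vertex_of_face_iff: "F face_of P \<Longrightarrow> v \<in> F \<Longrightarrow> vertex_of v F \<longleftrightarrow> vertex_of v P"
  unfolding vertex_of_def by (simp add: extreme_point_of_face)

lemma vertex_of_segment_face:
  "closed_segment v w face_of P \<Longrightarrow> vertex_of v P \<and> vertex_of w P"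
  unfolding vertex_of_def
  using extreme_point_of_face[of "closed_segment v w" P] extreme_point_of_segment by blast

lemma adjacent_in_iff: "adjacent_in P v w \<longleftrightarrow> v \<noteq> w \<and> closed_segment v w face_of P"
  using vertex_of_segment_face
  by (auto simp: adjacent_in_def edge_of_def segment_convex_hull aff_dim_convex_hull)

lemma edge_walk_iff:
  "edge_walk P k v w \<longleftrightarrow> (\<exists>p. p 0 = v \<and> p k = w \<and> (\<forall>i\<le>k. vertex_of (p i) P)
      \<and> (\<forall>i<k. adjacent_in P (p i) (p (Suc i))))"
proof
  assume "edge_walk P k v w"
  then obtain p where p: "p 0 = v" "p k = w" "vertex_of v P"
      "\<forall>i<k. adjacent_in P (p i) (p (Suc i))"
    unfolding edge_walk_def by blast
  have "vertex_of (p i) P" if "i \<le> k" for i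
    using that p by (cases i) (auto simp: adjacent_in_def)
  with p show "\<exists>p. p 0 = v \<and> p k = w \<and> (\<forall>i\<le>k. vertex_of (p i) P)
      \<and> (\<forall>i<k. adjacent_in P (p i) (p (Suc i)))" by blast
qed (auto simp: edge_walk_def)

lemma edge_walk_append:
  assumes "edge_walk P k v u" "edge_walk P l u w"
  shows "edge_walk P (k + l) v w"
proof -
  obtain p where p: "p 0 = v" "p k = u" "vertex_of v P" "\<forall>i<k. adjacent_in P (p i) (p (Suc i))"
    using assms(1) unfolding edge_walk_def by blast
  obtain q where q: "q 0 = u" "q l = w" "\<forall>i<l. adjacent_in P (q i) (q (Suc i))"
    using assms(2) unfolding edge_walk_def by blast
  define r where "r i = (if i \<le> k then p i else q (i - k))" for i
  have "adjacent_in P (r i) (r (Suc i))" if "i < k + l" for i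
    using that p q by (cases "i < k") (auto simp: r_def Suc_diff_le)
  then show ?thesis
    unfolding edge_walk_def using p q by (intro exI[of _ r]) (auto simp: r_def)
qed

lemma edge_dist_le_enat_iff: "edge_dist P v w \<le> enat n \<longleftrightarrow> (\<exists>k\<le>n. edge_walk P k v w)"
proof -
  have "edge_dist P v w \<le> enat n \<longleftrightarrow> edge_dist P v w < enat (Suc n)"
    by (cases "edge_dist P v w") auto
  also have "\<dots> \<longleftrightarrow> (\<exists>k\<le>n. edge_walk P k v w)"
    unfolding edge_dist_def by (auto simp: INF_less_iff less_Suc_eq_le)
  finally show ?thesis .
qed

lemma edge_dist_le_walk: "edge_walk P k v w \<Longrightarrow> edge_dist P v w \<le> enat k"
  using edge_dist_le_enat_iff by blast

lemma edge_dist_triangle: "edge_dist P u w \<le> edge_dist P u v + edge_dist P v w"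
proof (cases "edge_dist P u v" ; cases "edge_dist P v w")
  fix m n assume "edge_dist P u v = enat m" "edge_dist P v w = enat n"
  then obtain k l where "k \<le> m" "edge_walk P k u v" "l \<le> n" "edge_walk P l v w"
    using edge_dist_le_enat_iff by (metis order_refl)
  then have "edge_dist P u w \<le> enat (k + l)"
    by (intro edge_dist_le_walk edge_walk_append)
  also have "\<dots> \<le> enat m + enat n"
    using \<open>k \<le> m\<close> \<open>l \<le> n\<close> by simp
  finally show ?thesis using \<open>edge_dist P u v = enat m\<close> \<open>edge_dist P v w = enat n\<close> by simp
qed auto

lemma edge_dist_self:
  assumes "vertex_of v P"
  shows "edge_dist P v v = 0"
proof -
  have "edge_walk P 0 v v"
    using assms unfolding edge_walk_def by (intro exI[of _ "\<lambda>_. v"]) simp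
  then show ?thesis
    using edge_dist_le_walk[of P 0 v v] by (simp add: zero_enat_def[symmetric])
qed

lemma edge_dist_segment_face_le_1:
  assumes "closed_segment v w face_of P"
  shows "edge_dist P v w \<le> 1"
proof (cases "v = w")
  case True
  then show ?thesis using assms vertex_of_segment_face edge_dist_self by fastforce
next
  case False
  then have "adjacent_in P v w" "vertex_of v P"
    using assms vertex_of_segment_face adjacent_in_iff by blast+
  then have "edge_walk P 1 v w"
    unfolding edge_walk_def by (intro exI[of _ "\<lambda>i. if i = 0 then v else w"]) auto
  then show ?thesis using edge_dist_le_walk one_enat_def by metis
qed

lemma edge_dist_le_comb_diam:
  "vertex_of v P \<Longrightarrow> vertex_of w P \<Longrightarrow> edge_dist P v w \<le> comb_diam P"
  unfolding comb_diam_def by (rule SUP_upper2[of v], simp, rule SUP_upper2[of w]) auto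

lemma comb_diam_std_poly_le_mat_diam: "comb_diam (std_poly M r) \<le> mat_diam M"
  unfolding mat_diam_def by (rule SUP_upper) simp

lemma edge_dist_face_le:
  assumes "F face_of P"
  shows "edge_dist P v w \<le> edge_dist F v w"
proof -
  have "edge_walk P k v w" if "edge_walk F k v w" for k
    using that assms
    by (auto simp: edge_walk_def adjacent_in_iff vertex_of_def extreme_point_of_face
        intro: face_of_trans)
  then show ?thesis
    unfolding edge_dist_def by (auto intro!: INF_mono)
qed

section \<open>Linear maps that are injective on a convex set\<close>

lemma face_of_linear_preimage:
  assumes f: "linear f" and "convex H" and F: "F face_of f ` H"
  shows "H \<inter> f -` F face_of H"
proof -
  have "p \<in> f -` F \<and> q \<in> f -` F"
    if pq: "p \<in> H" "q \<in> H" and z: "z \<in> H \<inter> f -` F" "z \<in> open_segment p q" for p q z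
  proof -
    obtain u where u: "0 < u" "u < 1" "z = (1 - u) *\<^sub>R p + u *\<^sub>R q"
      using z(2) by (auto simp: in_segment)
    have fz: "f z = (1 - u) *\<^sub>R f p + u *\<^sub>R f q"
      using u(3) f by (simp add: linear_add linear_scale)
    show ?thesis
    proof (cases "f p = f q")
      case True
      then show ?thesis using fz z by (simp flip: scaleR_add_left)
    next
      case False
      then have "f z \<in> open_segment (f p) (f q)"
        using u fz by (auto simp: in_segment)
      then show ?thesis using face_ofD[OF F] z pq by auto
    qed
  qed
  moreover have "convex (H \<inter> f -` F)"
    using convex_Int[OF \<open>convex H\<close> convex_linear_vimage[OF f face_of_imp_convex[OF F]]] .
  ultimately show ?thesis
    unfolding face_of_def by blast
qed

lemma vertex_of_linear_image_iff:
  assumes f: "linear f" "inj_on f H" and "convex H" "p \<in> H"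
  shows "vertex_of (f p) (f ` H) \<longleftrightarrow> vertex_of p H"
proof
  assume "vertex_of (f p) (f ` H)"
  then have "H \<inter> f -` {f p} face_of H"
    using assms by (intro face_of_linear_preimage) (auto simp: vertex_of_def face_of_singleton)
  moreover have "H \<inter> f -` {f p} = {p}"
    using f(2) \<open>p \<in> H\<close> by (auto dest: inj_onD)
  ultimately show "vertex_of p H"
    by (simp add: vertex_of_def face_of_singleton)
next
  assume p: "vertex_of p H"
  have "f p \<notin> open_segment (f a) (f b)" if "a \<in> H" "b \<in> H" for a b
  proof
    assume "f p \<in> open_segment (f a) (f b)"
    then obtain u where u: "0 < u" "u < 1" "f a \<noteq> f b" "f p = (1 - u) *\<^sub>R f a + u *\<^sub>R f b"
      by (auto simp: in_segment)
    define c where "c = (1 - u) *\<^sub>R a + u *\<^sub>R b"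
    have "c \<in> H"
      using \<open>convex H\<close> that u unfolding c_def by (auto simp: convex_alt)
    moreover have "f c = f p"
      using u(4) f(1) by (simp add: c_def linear_add linear_scale)
    ultimately have "p = c"
      using f(2) \<open>p \<in> H\<close> by (auto dest: inj_onD)
    then have "p \<in> open_segment a b"
      using u by (auto simp: in_segment c_def)
    then show False
      using p that by (auto simp: vertex_of_def extreme_point_of_def)
  qed
  then show "vertex_of (f p) (f ` H)"
    using \<open>p \<in> H\<close> by (auto simp: vertex_of_def extreme_point_of_def)
qed

lemma adjacent_in_linear_preimage:
  assumes f: "linear f" "inj_on f H" and "convex H" "p \<in> H" "q \<in> H"
    and adj: "adjacent_in (f ` H) (f p) (f q)"
  shows "adjacent_in H p q"
proof -
  have "H \<inter> f -` closed_segment (f p) (f q) face_of H"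
    using adj assms by (intro face_of_linear_preimage) (auto simp: adjacent_in_iff)
  moreover have "H \<inter> f -` closed_segment (f p) (f q) = closed_segment p q"
  proof
    have "closed_segment p q \<subseteq> H"
      using assms by (simp add: closed_segment_subset)
    then show "H \<inter> f -` closed_segment (f p) (f q) \<subseteq> closed_segment p q"
      using f by (auto simp: closed_segment_linear_image dest: inj_onD)
    show "closed_segment p q \<subseteq> H \<inter> f -` closed_segment (f p) (f q)"
      using \<open>closed_segment p q \<subseteq> H\<close> f(1) by (auto simp: closed_segment_linear_image)
  qed
  ultimately show ?thesis
    using adj by (auto simp: adjacent_in_iff)
qed

lemma edge_dist_le_linear_image:
  assumes f: "linear f" "inj_on f H" and "convex H" "p \<in> H" "q \<in> H"
  shows "edge_dist H p q \<le> edge_dist (f ` H) (f p) (f q)"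
proof -
  have "edge_walk H k p q" if walk: "edge_walk (f ` H) k (f p) (f q)" for k
  proof -
    obtain r where r: "r 0 = f p" "r k = f q" "\<forall>i\<le>k. vertex_of (r i) (f ` H)"
        "\<forall>i<k. adjacent_in (f ` H) (r i) (r (Suc i))"
      using walk unfolding edge_walk_iff by blast
    define l where "l i = inv_into H f (r i)" for i
    have l: "l i \<in> H" "f (l i) = r i" if "i \<le> k" for i
    proof -
      have "r i \<in> f ` H"
        using r(3) that vertex_of_in by blast
      then show "l i \<in> H" "f (l i) = r i"
        unfolding l_def by (simp_all add: inv_into_into f_inv_into_f)
    qed
    have "l 0 = p" "l k = q"
      using r(1,2) assms by (auto simp: l_def)
    moreover have "vertex_of p H"
      using r(1,3) vertex_of_linear_image_iff[OF f \<open>convex H\<close> \<open>p \<in> H\<close>] by auto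
    moreover have "adjacent_in H (l i) (l (Suc i))" if "i < k" for i
    proof (rule adjacent_in_linear_preimage[OF f \<open>convex H\<close>])
      show "l i \<in> H" "l (Suc i) \<in> H"
        using l that by simp_all
      show "adjacent_in (f ` H) (f (l i)) (f (l (Suc i)))"
        using r(4) l that by simp
    qed
    ultimately show ?thesis
      unfolding edge_walk_def by blast
  qed
  then show ?thesis
    unfolding edge_dist_def by (auto intro!: INF_mono)
qed

section \<open>Shortcutting a chain through clusters\<close>

lemma linked_set_reaches:
  fixes d :: "'a \<Rightarrow> 'a \<Rightarrow> enat"
  assumes triangle: "\<And>u v w. d u w \<le> d u v + d v w"
    and diam: "\<And>u u'. u \<in> Y \<Longrightarrow> u' \<in> Y \<Longrightarrow> d u u' \<le> enat D"
    and link: "X = Y \<or> (\<exists>s\<in>X. \<exists>s'\<in>Y. d s s' \<le> 1)" and "q \<in> Y"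
  shows "\<exists>s\<in>X. d s q \<le> enat (1 + D)"
  using link
proof (elim disjE bexE)
  assume "X = Y"
  have "d q q \<le> enat (1 + D)"
    using diam[of q q] \<open>q \<in> Y\<close> order_trans by fastforce
  with \<open>X = Y\<close> \<open>q \<in> Y\<close> show ?thesis
    by blast
next
  fix s s' assume s: "s \<in> X" "s' \<in> Y" "d s s' \<le> 1"
  have "d s q \<le> d s s' + d s' q"
    by (rule triangle)
  also have "\<dots> \<le> 1 + enat D"
    using s(3) diam[OF s(2) \<open>q \<in> Y\<close>] by (rule add_mono)
  finally show ?thesis
    using s(1) by (auto simp: one_enat_def)
qed

(* Jumping from the first to the last visit of a cluster costs at most D; every other step of
   the chain costs at most 1. *)

lemma chain_dist_le_clusters:
  fixes d :: "'a \<Rightarrow> 'a \<Rightarrow> enat" and R :: "nat \<Rightarrow> 'a set"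
  assumes triangle: "\<And>u v w. d u w \<le> d u v + d v w"
    and "finite \<C>"
    and "\<And>C q q'. C \<in> \<C> \<Longrightarrow> q \<in> C \<Longrightarrow> q' \<in> C \<Longrightarrow> d q q' \<le> enat D"
    and "\<And>i q q'. i \<le> k \<Longrightarrow> R i \<notin> \<C> \<Longrightarrow> q \<in> R i \<Longrightarrow> q' \<in> R i \<Longrightarrow> d q q' = 0"
    and "\<And>i. i < k \<Longrightarrow> R i = R (Suc i) \<or> (\<exists>q\<in>R i. \<exists>q'\<in>R (Suc i). d q q' \<le> 1)"
    and "q \<in> R 0" "q' \<in> R k"
  shows "d q q' \<le> enat (k + card \<C> * D)"
  using assms(2-)
proof (induction k arbitrary: \<C> q' rule: less_induct)
  case (less k)
  note finite = less.prems(1) and cluster = less.prems(2) and point = less.prems(3)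
    and link = less.prems(4) and q = less.prems(5) and q' = less.prems(6)
  have tri: "d u w \<le> enat (m + n)" if "d u v \<le> enat m" "d v w \<le> enat n" for u v w m n
    using order_trans[OF triangle add_mono[OF that]] by simp
  have prefix: "d q s \<le> enat (j + card \<C>' * D)"
    if j: "j < k" and sub: "\<C>' \<subseteq> \<C>" and keep: "\<And>i. i \<le> j \<Longrightarrow> R i \<in> \<C> \<Longrightarrow> R i \<in> \<C>'"
      and s: "s \<in> R j" for j \<C>' s
  proof (rule less.IH[OF j finite_subset[OF sub finite] _ _ _ q s])
    show "d u u' \<le> enat D" if "C \<in> \<C>'" "u \<in> C" "u' \<in> C" for C u u'
      using cluster[of C u u'] sub that by blast
    show "d u u' = 0" if "i \<le> j" "R i \<notin> \<C>'" "u \<in> R i" "u' \<in> R i" for i u u'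
      using point[of i u u'] keep[of i] j that by (meson less_imp_le_nat order_trans)
    show "R i = R (Suc i) \<or> (\<exists>u\<in>R i. \<exists>u'\<in>R (Suc i). d u u' \<le> 1)" if "i < j" for i
      using link[of i] j that by simp
  qed
  show ?case
  proof (cases "R k \<in> \<C>")
    case True
    define e where "e = (LEAST i. R i = R k)"
    have e: "e \<le> k" "R e = R k" "\<And>i. i < e \<Longrightarrow> R i \<noteq> R k"
      unfolding e_def by (simp add: Least_le, rule LeastI[of _ k], simp, rule not_less_Least)
    have card: "card \<C> = Suc (card (\<C> - {R k}))"
      using card_Suc_Diff1[OF finite True] by simp
    show ?thesis
    proof (cases "e = 0")
      case True
      then have "d q q' \<le> enat D"
        using cluster[OF \<open>R k \<in> \<C>\<close> _ q'] q e(2) by simp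
      also have "\<dots> \<le> enat (k + card \<C> * D)"
        using card by simp
      finally show ?thesis .
    next
      case False
      have "d u u' \<le> enat D" if "u \<in> R k" "u' \<in> R k" for u u'
        using cluster[OF True that] .
      then obtain s where s: "s \<in> R (e - 1)" "d s q' \<le> enat (1 + D)"
        using linked_set_reaches[where d = d and D = D and Y = "R k" and X = "R (e - 1)" and q = q',
            OF triangle] link[of "e - 1"] e q' False by auto
      have "d q s \<le> enat (e - 1 + card (\<C> - {R k}) * D)"
        using e False s(1) by (intro prefix) auto
      then have "d q q' \<le> enat (e - 1 + card (\<C> - {R k}) * D + (1 + D))"
        using s(2) by (rule tri)
      also have "\<dots> \<le> enat (k + card \<C> * D)"
        using card e(1) False by simp
      finally show ?thesis .
    qed
  next
    case False
    show ?thesis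
    proof (cases "k = 0")
      case True
      then show ?thesis
        using point False q q' by simp
    next
      case k: False
      have "d u u' \<le> enat 0" if "u \<in> R k" "u' \<in> R k" for u u'
        using point[of k u u'] False that by (simp add: zero_enat_def)
      then obtain s where s: "s \<in> R (k - 1)" "d s q' \<le> enat (1 + 0)"
        using linked_set_reaches[where d = d and D = 0 and Y = "R k" and X = "R (k - 1)" and q = q',
            OF triangle] link[of "k - 1"] k q' by auto
      have "d q s \<le> enat (k - 1 + card \<C> * D)"
        using k s(1) by (intro prefix) auto
      then have "d q q' \<le> enat (k - 1 + card \<C> * D + (1 + 0))"
        using s(2) by (rule tri)
      then show ?thesis
        using k by simp
    qed
  qed
qed

section \<open>Edge walks inside a slab\<close>

lemma closed_segment_subset_image_real:
  fixes f :: "real \<Rightarrow> real"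
  assumes "continuous_on (closed_segment x y) f"
  shows "closed_segment (f x) (f y) \<subseteq> f ` closed_segment x y"
proof -
  have "convex (f ` closed_segment x y)"
    using connected_continuous_image[OF assms connected_segment] by (simp add: connected_convex_1)
  then show ?thesis
    by (simp add: closed_segment_subset)
qed

lemma closed_segment_line_image:
  "closed_segment (v + s *\<^sub>R (w - v)) (v + t *\<^sub>R (w - v))
     = (\<lambda>r. v + r *\<^sub>R (w - v)) ` closed_segment s t"
proof -
  have "linear (\<lambda>r::real. r *\<^sub>R (w - v))"
    by (simp add: linear_scaleR_left)
  then show ?thesis
    using closed_segment_linear_image[of "\<lambda>r. r *\<^sub>R (w - v)" s t]
    by (simp add: closed_segment_translation image_image)
qed

definition slab :: "'a::euclidean_space set \<Rightarrow> 'a \<Rightarrow> real set \<Rightarrow> 'a set" where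
  "slab P a T = {u \<in> P. a \<bullet> u \<in> T}"

locale convex_slab =
  fixes P :: "'a::euclidean_space set" and a :: 'a and T :: "real set"
  assumes convex_P: "convex P" and convex_T: "convex T" and closed_T: "closed T"
begin

abbreviation S :: "'a set" where
  "S \<equiv> slab P a T"

lemma convex_S: "convex S"
proof -
  have "S = P \<inter> (\<lambda>u. a \<bullet> u) -` T"
    by (auto simp: slab_def)
  then show ?thesis
    using convex_Int[OF convex_P convex_linear_vimage[OF
          bounded_linear.linear[OF bounded_linear_inner_right] convex_T]] by simp
qed

definition top_vertices :: "'a set" where
  "top_vertices = {q. vertex_of q S \<and> (\<forall>u\<in>S. a \<bullet> u \<le> a \<bullet> q)}"

definition bottom_vertices :: "'a set" where
  "bottom_vertices = {q. vertex_of q S \<and> (\<forall>u\<in>S. a \<bullet> q \<le> a \<bullet> u)}"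

(* A vertex of a walk in P that lies above (below) the slab is replaced by the vertices of the
   top (bottom) level of S.  An edge of P that meets S does so in an edge or a vertex of S, which
   links the replacements of its two endpoints; otherwise both endpoints get the same
   replacement. *)

definition representatives :: "'a \<Rightarrow> 'a set" where
  "representatives v =
     (if a \<bullet> v \<in> T then {v} else if \<forall>s\<in>T. s < a \<bullet> v then top_vertices else bottom_vertices)"

lemma in_representatives_if_no_level_between:
  assumes "vertex_of q S" and between: "\<And>s. s \<in> T \<Longrightarrow> s \<notin> open_segment (a \<bullet> v) (a \<bullet> q)"
    and "a \<bullet> v \<in> T \<Longrightarrow> q = v"
  shows "q \<in> representatives v"
proof -
  have "q \<in> S"
    using assms(1) by (rule vertex_of_in)
  then have "a \<bullet> q \<in> T"
    by (simp add: slab_def)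
  have "a \<bullet> u \<le> a \<bullet> q" if "u \<in> S" "\<forall>s\<in>T. s < a \<bullet> v" for u
  proof -
    have "a \<bullet> u \<in> T" "a \<bullet> u < a \<bullet> v"
      using that by (auto simp: slab_def)
    then show ?thesis
      using between[of "a \<bullet> u"] by (cases "a \<bullet> v \<le> a \<bullet> q") (auto simp: open_segment_eq_real_ivl)
  qed
  moreover have "a \<bullet> q \<le> a \<bullet> u"
    if u: "u \<in> S" and v: "a \<bullet> v \<notin> T" "\<not> (\<forall>s\<in>T. s < a \<bullet> v)" for u
  proof -
    obtain s where "s \<in> T" "a \<bullet> v \<le> s"
      using v(2) by (auto simp: not_less)
    then have "a \<bullet> v < s"
      using v(1) by (metis order.order_iff_strict)
    have "a \<bullet> u \<in> T"
      using u by (auto simp: slab_def)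
    show ?thesis
    proof (rule ccontr)
      assume "\<not> a \<bullet> q \<le> a \<bullet> u"
      then have "a \<bullet> u \<in> open_segment (a \<bullet> v) (a \<bullet> q) \<or> a \<bullet> v \<in> closed_segment (a \<bullet> u) s"
        using \<open>a \<bullet> v < s\<close> by (auto simp: open_segment_eq_real_ivl closed_segment_eq_real_ivl)
      moreover have "closed_segment (a \<bullet> u) s \<subseteq> T"
        using convex_T \<open>a \<bullet> u \<in> T\<close> \<open>s \<in> T\<close> by (simp add: closed_segment_subset)
      ultimately show False
        using between[of "a \<bullet> u"] \<open>a \<bullet> u \<in> T\<close> v(1) by blast
    qed
  qed
  ultimately show ?thesis
    using assms by (auto simp: representatives_def top_vertices_def bottom_vertices_def)
qed

lemma slab_segment_parameters:
  assumes "\<exists>t\<in>{0..1}. a \<bullet> (v + t *\<^sub>R (w - v)) \<in> T"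
  obtains t1 t2 where "0 \<le> t1" "t1 \<le> t2" "t2 \<le> 1"
    "{t \<in> {0..1}. a \<bullet> (v + t *\<^sub>R (w - v)) \<in> T} = {t1..t2}"
proof -
  define f where "f t = a \<bullet> (v + t *\<^sub>R (w - v))" for t
  define J where "J = {t \<in> {0..1}. f t \<in> T}"
  have "J = {0..1} \<inter> f -` T"
    by (auto simp: J_def)
  then have "compact J"
    using closed_T unfolding f_def by (auto intro!: compact_Int_closed continuous_closed_vimage)
  moreover have "convex J"
    unfolding convex_alt
  proof (intro ballI allI impI)
    fix t t' u :: real assume "t \<in> J" "t' \<in> J" "0 \<le> u \<and> u \<le> 1"
    then have "(1 - u) * f t + u * f t' \<in> T" "(1 - u) * t + u * t' \<in> {0..1}"
      using convex_T convex_real_interval(5)[of 0 1] by (auto simp: J_def convex_alt)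
    moreover have "f ((1 - u) * t + u * t') = (1 - u) * f t + u * f t'"
      by (simp add: f_def inner_add_right inner_diff_right algebra_simps)
    ultimately show "(1 - u) *\<^sub>R t + u *\<^sub>R t' \<in> J"
      by (simp add: J_def)
  qed
  ultimately obtain t1 t2 where J: "J = {t1..t2}"
    by (meson connected_compact_interval_1 convex_connected)
  moreover have "J \<noteq> {}"
    using assms by (auto simp: J_def f_def)
  ultimately have "t1 \<in> J" "t2 \<in> J"
    by auto
  then have "0 \<le> t1" "t1 \<le> t2" "t2 \<le> 1"
    using J by (auto simp: J_def)
  moreover have "{t \<in> {0..1}. a \<bullet> (v + t *\<^sub>R (w - v)) \<in> T} = {t1..t2}"
    using J by (simp add: J_def f_def)
  ultimately show ?thesis
    by (rule that)
qed

lemma slab_segment_face: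
  assumes edge: "closed_segment v w face_of P"
    and J: "{t \<in> {0..1}. a \<bullet> (v + t *\<^sub>R (w - v)) \<in> T} = {t1..t2}" "t1 \<le> t2"
  shows "closed_segment (v + t1 *\<^sub>R (w - v)) (v + t2 *\<^sub>R (w - v)) face_of S"
proof -
  define h where "h t = v + t *\<^sub>R (w - v)" for t
  have "closed_segment (h t1) (h t2) = h ` {t \<in> {0..1}. a \<bullet> h t \<in> T}"
    using J closed_segment_line_image[of v t1 w t2] by (simp add: h_def closed_segment_eq_real_ivl)
  also have "\<dots> = h ` {0..1} \<inter> {u. a \<bullet> u \<in> T}"
    by auto
  also have "h ` {0..1} = closed_segment v w"
    using closed_segment_line_image[of v 0 w 1] by (simp add: h_def closed_segment_eq_real_ivl)
  finally have "closed_segment (h t1) (h t2) = closed_segment v w \<inter> {u. a \<bullet> u \<in> T}" .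
  moreover have "closed_segment v w \<inter> {u. a \<bullet> u \<in> T} face_of P \<inter> {u. a \<bullet> u \<in> T}"
    using convex_linear_vimage[OF bounded_linear.linear[OF bounded_linear_inner_right] convex_T]
    by (intro face_of_slice[OF edge]) (simp add: vimage_def)
  moreover have "P \<inter> {u. a \<bullet> u \<in> T} = S"
    by (auto simp: slab_def)
  ultimately show ?thesis
    by (simp add: h_def)
qed

lemma slab_segment_no_level_between:
  assumes J: "{t \<in> {0..1}. a \<bullet> (v + t *\<^sub>R (w - v)) \<in> T} = {t1..t2}"
    and t: "t' \<in> {0..1}" "t0 \<in> {t1..t2}" "closed_segment t' t0 \<inter> {t1..t2} \<subseteq> {t0}"
    and "s \<in> T"
  shows "s \<notin> open_segment (a \<bullet> (v + t' *\<^sub>R (w - v))) (a \<bullet> (v + t0 *\<^sub>R (w - v)))"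
proof
  define f where "f t = a \<bullet> (v + t *\<^sub>R (w - v))" for t
  assume "s \<in> open_segment (f t') (f t0)"
  moreover have "closed_segment (f t') (f t0) \<subseteq> f ` closed_segment t' t0"
    unfolding f_def by (intro closed_segment_subset_image_real continuous_intros)
  ultimately obtain t where "t \<in> closed_segment t' t0" "f t = s"
    using open_closed_segment by blast
  moreover have "t0 \<in> {0..1}"
    using J t(2) by blast
  ultimately have "t \<in> {t1..t2} \<inter> closed_segment t' t0"
    using J t(1) \<open>s \<in> T\<close> by (auto simp: f_def closed_segment_eq_real_ivl split: if_splits)
  then have "s = f t0"
    using t(3) \<open>f t = s\<close> by blast
  with \<open>s \<in> open_segment (f t') (f t0)\<close> show False
    by (simp add: open_segment_def)
qed

lemma edge_links_representatives:
  assumes edge: "closed_segment v w face_of P"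
    and meets: "\<exists>t\<in>{0..1}. a \<bullet> (v + t *\<^sub>R (w - v)) \<in> T"
  shows "\<exists>q\<in>representatives v. \<exists>q'\<in>representatives w. edge_dist S q q' \<le> 1"
proof -
  define h where "h t = v + t *\<^sub>R (w - v)" for t
  obtain t1 t2 where t12: "0 \<le> t1" "t1 \<le> t2" "t2 \<le> 1"
      and J: "{t \<in> {0..1}. a \<bullet> h t \<in> T} = {t1..t2}"
    using slab_segment_parameters[OF meets] unfolding h_def by blast
  have face: "closed_segment (h t1) (h t2) face_of S"
    using slab_segment_face[OF edge] J t12 by (simp add: h_def)
  have "h t1 \<in> representatives v"
  proof (rule in_representatives_if_no_level_between)
    show "vertex_of (h t1) S"
      using face vertex_of_segment_face by blast
    show "s \<notin> open_segment (a \<bullet> v) (a \<bullet> h t1)" if "s \<in> T" for s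
      using slab_segment_no_level_between[of v w t1 t2 0 t1 s] J t12 that
      by (simp add: h_def closed_segment_eq_real_ivl)
    show "h t1 = v" if "a \<bullet> v \<in> T"
    proof -
      have "0 \<in> {t1..t2}"
        using that J[symmetric] by (simp add: h_def)
      then show ?thesis
        using t12 by (simp add: h_def)
    qed
  qed
  moreover have "h t2 \<in> representatives w"
  proof (rule in_representatives_if_no_level_between)
    show "vertex_of (h t2) S"
      using face vertex_of_segment_face by blast
    show "s \<notin> open_segment (a \<bullet> w) (a \<bullet> h t2)" if "s \<in> T" for s
      using slab_segment_no_level_between[of v w t1 t2 1 t2 s] J t12 that
      by (simp add: h_def closed_segment_eq_real_ivl)
    show "h t2 = w" if "a \<bullet> w \<in> T"
    proof -
      have "1 \<in> {t1..t2}"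
        using that J[symmetric] by (simp add: h_def)
      then show ?thesis
        using t12 by (simp add: h_def)
    qed
  qed
  ultimately show ?thesis
    using edge_dist_segment_face_le_1[OF face] by blast
qed

lemma representatives_link:
  assumes edge: "closed_segment v w face_of P"
  shows "representatives v = representatives w
    \<or> (\<exists>q\<in>representatives v. \<exists>q'\<in>representatives w. edge_dist S q q' \<le> 1)"
proof (cases "\<exists>t\<in>{0..1}. a \<bullet> (v + t *\<^sub>R (w - v)) \<in> T")
  case True
  then show ?thesis
    using edge_links_representatives[OF edge] by blast
next
  case False
  define f where "f t = a \<bullet> (v + t *\<^sub>R (w - v))" for t
  have "closed_segment (f 0) (f 1) \<subseteq> f ` closed_segment 0 1"
    by (rule closed_segment_subset_image_real) (simp add: f_def continuous_intros)
  then have between: "s \<notin> closed_segment (a \<bullet> v) (a \<bullet> w)" if "s \<in> T" for s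
    using False that by (force simp: f_def closed_segment_eq_real_ivl)
  then have "a \<bullet> v \<notin> T" "a \<bullet> w \<notin> T"
    by auto
  moreover have "s < a \<bullet> v \<longleftrightarrow> s < a \<bullet> w" if "s \<in> T" for s
    using between[OF that] by (auto simp: closed_segment_eq_real_ivl split: if_splits)
  then have "(\<forall>s\<in>T. s < a \<bullet> v) \<longleftrightarrow> (\<forall>s\<in>T. s < a \<bullet> w)"
    by blast
  ultimately show ?thesis
    by (simp add: representatives_def)
qed

lemma edge_dist_level_le:
  assumes slices: "\<And>g. g \<in> T \<Longrightarrow> comb_diam (P \<inter> {u. a \<bullet> u = g}) \<le> D"
    and face: "S \<inter> {u. a \<bullet> u = a \<bullet> q} face_of S"
    and q: "vertex_of q S" "vertex_of q' S" "a \<bullet> q' = a \<bullet> q"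
  shows "edge_dist S q q' \<le> D"
proof -
  have "q \<in> S" "q' \<in> S"
    using q vertex_of_in by blast+
  then have "a \<bullet> q \<in> T"
    by (simp add: slab_def)
  have "edge_dist S q q' \<le> edge_dist (S \<inter> {u. a \<bullet> u = a \<bullet> q}) q q'"
    by (rule edge_dist_face_le[OF face])
  also have "\<dots> \<le> comb_diam (S \<inter> {u. a \<bullet> u = a \<bullet> q})"
    using q \<open>q \<in> S\<close> \<open>q' \<in> S\<close> vertex_of_face_iff[OF face]
    by (intro edge_dist_le_comb_diam) simp_all
  also have "S \<inter> {u. a \<bullet> u = a \<bullet> q} = P \<inter> {u. a \<bullet> u = a \<bullet> q}"
    using \<open>a \<bullet> q \<in> T\<close> by (auto simp: slab_def)
  also have "comb_diam \<dots> \<le> D"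
    using slices[OF \<open>a \<bullet> q \<in> T\<close>] .
  finally show ?thesis .
qed

lemma edge_dist_top_vertices_le:
  assumes slices: "\<And>g. g \<in> T \<Longrightarrow> comb_diam (P \<inter> {u. a \<bullet> u = g}) \<le> D"
    and "q \<in> top_vertices" "q' \<in> top_vertices"
  shows "edge_dist S q q' \<le> D"
proof -
  have q: "vertex_of q S" "\<forall>u\<in>S. a \<bullet> u \<le> a \<bullet> q" "vertex_of q' S" "\<forall>u\<in>S. a \<bullet> u \<le> a \<bullet> q'"
    using assms(2,3) by (simp_all add: top_vertices_def)
  then have "a \<bullet> q' = a \<bullet> q"
    using vertex_of_in[OF q(1)] vertex_of_in[OF q(3)] by (meson antisym)
  moreover have "S \<inter> {u. a \<bullet> u = a \<bullet> q} face_of S"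
    using face_of_Int_supporting_hyperplane_le[OF convex_S] q(2) by blast
  ultimately show ?thesis
    using edge_dist_level_le[OF slices] q(1,3) by blast
qed

lemma edge_dist_bottom_vertices_le:
  assumes slices: "\<And>g. g \<in> T \<Longrightarrow> comb_diam (P \<inter> {u. a \<bullet> u = g}) \<le> D"
    and "q \<in> bottom_vertices" "q' \<in> bottom_vertices"
  shows "edge_dist S q q' \<le> D"
proof -
  have q: "vertex_of q S" "\<forall>u\<in>S. a \<bullet> q \<le> a \<bullet> u" "vertex_of q' S" "\<forall>u\<in>S. a \<bullet> q' \<le> a \<bullet> u"
    using assms(2,3) by (simp_all add: bottom_vertices_def)
  then have "a \<bullet> q' = a \<bullet> q"
    using vertex_of_in[OF q(1)] vertex_of_in[OF q(3)] by (meson antisym)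
  moreover have "S \<inter> {u. a \<bullet> u = a \<bullet> q} face_of S"
    using face_of_Int_supporting_hyperplane_ge[OF convex_S] q(2) by blast
  ultimately show ?thesis
    using edge_dist_level_le[OF slices] q(1,3) by blast
qed

lemma representatives_inside:
  assumes u: "vertex_of u P" and inside: "representatives u \<notin> {top_vertices, bottom_vertices}"
  shows "representatives u = {u}" "vertex_of u S"
proof -
  have "a \<bullet> u \<in> T"
    using inside by (auto simp: representatives_def split: if_splits)
  then show "representatives u = {u}"
    by (simp add: representatives_def)
  show "vertex_of u S"
    using u \<open>a \<bullet> u \<in> T\<close> vertex_of_in by (intro vertex_of_subset[OF u]) (auto simp: slab_def)
qed

lemma edge_dist_slab_le_walk:
  assumes walk: "edge_walk P k x x'" and x: "a \<bullet> x \<in> T" "a \<bullet> x' \<in> T"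
    and slices: "\<And>g. g \<in> T \<Longrightarrow> comb_diam (P \<inter> {u. a \<bullet> u = g}) \<le> enat D"
  shows "edge_dist S x x' \<le> enat (k + 2 * D)"
proof -
  obtain p where p: "p 0 = x" "p k = x'" "\<forall>i\<le>k. vertex_of (p i) P"
      "\<forall>i<k. adjacent_in P (p i) (p (Suc i))"
    using walk edge_walk_iff by blast
  have "edge_dist S x x' \<le> enat (k + card {top_vertices, bottom_vertices} * D)"
  proof (rule chain_dist_le_clusters[where R = "\<lambda>i. representatives (p i)"])
    show "edge_dist S u w \<le> edge_dist S u v + edge_dist S v w" for u v w
      by (rule edge_dist_triangle)
    show "edge_dist S q q' \<le> enat D" if "C \<in> {top_vertices, bottom_vertices}" "q \<in> C" "q' \<in> C"
      for C q q'
      using that edge_dist_top_vertices_le[OF slices] edge_dist_bottom_vertices_le[OF slices]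
      by blast
    show "edge_dist S q q' = 0"
      if "i \<le> k" "representatives (p i) \<notin> {top_vertices, bottom_vertices}"
        "q \<in> representatives (p i)" "q' \<in> representatives (p i)" for i q q'
      using that p(3) representatives_inside[of "p i"] by (simp add: edge_dist_self)
    show "representatives (p i) = representatives (p (Suc i))
        \<or> (\<exists>q\<in>representatives (p i). \<exists>q'\<in>representatives (p (Suc i)). edge_dist S q q' \<le> 1)"
      if "i < k" for i
      using p(4) that by (intro representatives_link) (simp add: adjacent_in_iff)
    show "x \<in> representatives (p 0)" "x' \<in> representatives (p k)"
      using p(1,2) x by (simp_all add: representatives_def)
  qed simp
  also have "\<dots> \<le> enat (k + 2 * D)"
    by (simp add: card_insert_if)
  finally show ?thesis .
qed

lemma edge_dist_slab_le:
  assumes "a \<bullet> x \<in> T" "a \<bullet> x' \<in> T"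
    and "\<And>g. g \<in> T \<Longrightarrow> comb_diam (P \<inter> {u. a \<bullet> u = g}) \<le> D"
  shows "edge_dist S x x' \<le> edge_dist P x x' + 2 * D"
proof (cases "edge_dist P x x' = \<infinity> \<or> D = \<infinity>")
  case True
  then show ?thesis
    by (auto simp: mult_2)
next
  case False
  then obtain n m where n: "edge_dist P x x' = enat n" and m: "D = enat m"
    by auto
  then obtain k where "k \<le> n" "edge_walk P k x x'"
    using edge_dist_le_enat_iff by (metis order_refl)
  then have "edge_dist S x x' \<le> enat (k + 2 * m)"
    using assms m by (intro edge_dist_slab_le_walk) auto
  also have "\<dots> \<le> edge_dist P x x' + 2 * D"
    using n m \<open>k \<le> n\<close> by (simp add: mult_2)
  finally show ?thesis .
qed

end

section \<open>Standard-form polyhedra\<close>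

definition stack_scalar :: "real \<Rightarrow> real ^ 'm \<Rightarrow> real ^ ('m option)" where
  "stack_scalar g r = (\<chi> i. case i of None \<Rightarrow> g | Some j \<Rightarrow> r $ j)"

lemma std_poly_stack_row:
  "std_poly (stack_row M c) (stack_scalar g r) = {z \<in> std_poly M r. c \<bullet> z = g}"
proof -
  have row: "(stack_row M c *v z) $ i = (case i of None \<Rightarrow> c \<bullet> z | Some j \<Rightarrow> (M *v z) $ j)" for z i
    by (cases i) (simp_all add: stack_row_def matrix_vector_mult_def inner_vec_def mult.commute)
  show ?thesis
    by (auto simp: std_poly_def vec_eq_iff split_option_all row stack_scalar_def)
qed

lemma supp_add_subset: "supp (u + v) \<subseteq> supp u \<union> supp v"
  by (auto simp: supp_def)

lemma supp_diff_subset: "supp (u - v) \<subseteq> supp u \<union> supp v"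
  by (auto simp: supp_def)

lemma supp_scaleR_subset: "supp (c *\<^sub>R u) \<subseteq> supp u"
  by (auto simp: supp_def)

lemma nonneg_perturb:
  fixes v e :: "real ^ 'n"
  assumes v: "nonneg v" and e: "supp e \<subseteq> supp v"
  obtains \<epsilon> where "0 < \<epsilon>" "nonneg (v + \<epsilon> *\<^sub>R e)" "nonneg (v - \<epsilon> *\<^sub>R e)"
proof
  define \<epsilon> where "\<epsilon> = Min (insert 1 ((\<lambda>i. v $ i / \<bar>e $ i\<bar>) ` supp e))"
  have pos: "0 < v $ i" if "i \<in> supp e" for i
    using that e v by (force simp: supp_def nonneg_def order_less_le)
  then show "0 < \<epsilon>"
    by (auto simp: \<epsilon>_def supp_def)
  have "\<epsilon> * \<bar>e $ i\<bar> \<le> v $ i" for i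
  proof (cases "i \<in> supp e")
    case True
    then have "\<epsilon> \<le> v $ i / \<bar>e $ i\<bar>"
      by (simp add: \<epsilon>_def)
    then show ?thesis
      using True by (simp add: supp_def pos_le_divide_eq)
  next
    case False
    then show ?thesis
      using v by (simp add: supp_def nonneg_def)
  qed
  then have bound: "\<bar>\<epsilon> * e $ i\<bar> \<le> v $ i" for i
    using \<open>0 < \<epsilon>\<close> by (simp add: abs_mult)
  have "0 \<le> v $ i + \<epsilon> * e $ i \<and> 0 \<le> v $ i - \<epsilon> * e $ i" for i
    using bound[of i] by (auto simp: abs_le_iff)
  then show "nonneg (v + \<epsilon> *\<^sub>R e)" "nonneg (v - \<epsilon> *\<^sub>R e)"
    by (simp_all add: nonneg_def)
qed

lemma vertex_of_supp_direction_zero: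
  assumes "vertex_of v X" "nonneg z" "supp e \<subseteq> supp z"
    and stays: "\<And>t. nonneg (z + t *\<^sub>R e) \<Longrightarrow> v + t *\<^sub>R d \<in> X"
  shows "d = 0"
proof (rule ccontr)
  assume "d \<noteq> 0"
  obtain \<epsilon> where "0 < \<epsilon>" "nonneg (z + \<epsilon> *\<^sub>R e)" "nonneg (z + (- \<epsilon>) *\<^sub>R e)"
    using nonneg_perturb[OF assms(2,3)] by auto
  then have "v + \<epsilon> *\<^sub>R d \<in> X" "v - \<epsilon> *\<^sub>R d \<in> X"
    using stays by fastforce+
  moreover have "v \<in> open_segment (v - \<epsilon> *\<^sub>R d) (v + \<epsilon> *\<^sub>R d)"
  proof -
    have "v - \<epsilon> *\<^sub>R d \<noteq> v + \<epsilon> *\<^sub>R d"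
    proof
      assume eq: "v - \<epsilon> *\<^sub>R d = v + \<epsilon> *\<^sub>R d"
      have "(2 * \<epsilon>) *\<^sub>R d = (v + \<epsilon> *\<^sub>R d) - (v - \<epsilon> *\<^sub>R d)"
        by (simp add: scaleR_2 flip: scaleR_scaleR)
      also have "\<dots> = 0"
        by (simp only: eq diff_self)
      finally show False
        using \<open>0 < \<epsilon>\<close> \<open>d \<noteq> 0\<close> by simp
    qed
    moreover have "midpoint (v - \<epsilon> *\<^sub>R d) (v + \<epsilon> *\<^sub>R d) = v"
      by (simp add: midpoint_def scaleR_2 flip: scaleR_add_right)
    ultimately show ?thesis
      using midpoint_in_open_segment by metis
  qed
  ultimately show False
    using assms(1) by (auto simp: vertex_of_def extreme_point_of_def)
qed

lemma vertex_of_std_poly_supp_unique: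
  assumes x: "vertex_of x (std_poly M r)" and u: "u \<in> std_poly M r" "supp u \<subseteq> supp x"
  shows "u = x"
proof -
  have "M *v x = r" "nonneg x" "M *v u = r"
    using vertex_of_in[OF x] u(1) by (simp_all add: std_poly_def)
  moreover have "supp (u - x) \<subseteq> supp x"
    using u(2) by (auto simp: supp_def)
  ultimately have "u - x = 0"
    by (intro vertex_of_supp_direction_zero[OF x, where e = "u - x" and z = x])
       (simp_all add: std_poly_def matrix_vector_right_distrib matrix_vector_mult_diff_distrib
         matrix_vector_mult_scaleR)
  then show ?thesis
    by simp
qed

lemma convex_nonneg: "convex {z :: real ^ 'n. nonneg z}"
  by (auto simp: convex_def nonneg_def)

lemma convex_std_poly: "convex (std_poly M r)"
proof -
  have "std_poly M r = (\<lambda>z. M *v z) -` {r} \<inter> {z. nonneg z}"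
    by (auto simp: std_poly_def)
  then show ?thesis
    using convex_Int[OF convex_linear_vimage[OF matrix_vector_mul_linear convex_singleton]
        convex_nonneg] by simp
qed

lemma face_of_supp_subset:
  fixes f :: "'a::euclidean_space \<Rightarrow> real ^ 'n" and Y :: "'n set"
  assumes f: "linear f" and "convex X" and f_nonneg: "\<And>z. z \<in> X \<Longrightarrow> nonneg (f z)"
  shows "{z \<in> X. supp (f z) \<subseteq> Y} face_of X"
proof -
  define c :: "real ^ 'n" where "c = (\<chi> i. if i \<in> Y then 0 else 1)"
  have c: "0 \<le> c \<bullet> w" "c \<bullet> w = 0 \<longleftrightarrow> supp w \<subseteq> Y" if "nonneg w" for w
  proof -
    have terms: "\<forall>i\<in>UNIV. 0 \<le> c $ i * w $ i"
      using that by (simp add: c_def nonneg_def)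
    then show "0 \<le> c \<bullet> w"
      by (simp add: inner_vec_def sum_nonneg)
    show "c \<bullet> w = 0 \<longleftrightarrow> supp w \<subseteq> Y"
      using sum_nonneg_eq_0_iff[of UNIV "\<lambda>i. c $ i * w $ i"] terms
      by (auto simp: inner_vec_def c_def supp_def)
  qed
  have "f ` X \<inter> {w. c \<bullet> w = 0} face_of f ` X"
    using c(1) f_nonneg convex_linear_image[OF f \<open>convex X\<close>]
    by (intro face_of_Int_supporting_hyperplane_ge) auto
  then have "X \<inter> f -` (f ` X \<inter> {w. c \<bullet> w = 0}) face_of X"
    by (rule face_of_linear_preimage[OF f \<open>convex X\<close>])
  also have "X \<inter> f -` (f ` X \<inter> {w. c \<bullet> w = 0}) = {z \<in> X. supp (f z) \<subseteq> Y}"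
    using c(2) f_nonneg by auto
  finally show ?thesis .
qed

section \<open>The polyhedron R\<close>

context
  fixes A :: "real ^ 'n1 ^ 'm1" and a :: "real ^ 'n1"
    and b :: "real ^ 'n2" and B :: "real ^ 'n2 ^ 'm2"
    and cA :: "real ^ 'm1" and cB :: "real ^ 'm2" and ca cb :: real
begin

lemma Rpoly_eq_Int:
  "Rpoly A a b B cA cB ca cb
     = fst -` std_poly A cA \<inter> snd -` std_poly B cB \<inter> {p. (a, b) \<bullet> p = ca + cb}"
  by (auto simp: Rpoly_def std_poly_def)

lemma convex_Rpoly: "convex (Rpoly A a b B cA cB ca cb)"
  unfolding Rpoly_eq_Int
  by (intro convex_Int convex_linear_vimage convex_std_poly convex_hyperplane
      bounded_linear.linear[OF bounded_linear_fst] bounded_linear.linear[OF bounded_linear_snd])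

lemma Rpoly_vertex_kernel_zero:
  assumes vertex: "vertex_of (x, y) (Rpoly A a b B cA cB ca cb)"
    and e: "B *v e = 0" "supp e \<subseteq> supp y" "b \<bullet> e = 0"
  shows "e = 0"
proof -
  have xy: "(x, y) \<in> Rpoly A a b B cA cB ca cb"
    using vertex by (rule vertex_of_in)
  have "(0, e) = (0 :: (real ^ 'n1) \<times> (real ^ 'n2))"
  proof (rule vertex_of_supp_direction_zero[OF vertex _ e(2)])
    show "nonneg y"
      using xy by (simp add: Rpoly_def)
    show "(x, y) + t *\<^sub>R (0, e) \<in> Rpoly A a b B cA cB ca cb" if "nonneg (y + t *\<^sub>R e)" for t
      using xy that e by (simp add: Rpoly_def matrix_vector_right_distrib matrix_vector_mult_scaleR
          inner_add_right)
  qed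
  then show ?thesis
    by (simp add: zero_prod_def)
qed

lemma Rpoly_vertex_kernel_line:
  assumes vertex: "vertex_of (x, y) (Rpoly A a b B cA cB ca cb)"
  obtains d where "B *v d = 0" "supp d \<subseteq> supp y"
    "\<And>e. B *v e = 0 \<Longrightarrow> supp e \<subseteq> supp y \<Longrightarrow> e = (b \<bullet> e) *\<^sub>R d"
proof (cases "\<exists>e0. B *v e0 = 0 \<and> supp e0 \<subseteq> supp y \<and> b \<bullet> e0 \<noteq> 0")
  case True
  then obtain e0 where e0: "B *v e0 = 0" "supp e0 \<subseteq> supp y" "b \<bullet> e0 \<noteq> 0"
    by blast
  define d where "d = (1 / (b \<bullet> e0)) *\<^sub>R e0"
  have d: "B *v d = 0" "supp d \<subseteq> supp y" "b \<bullet> d = 1"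
    using e0 by (auto simp: d_def matrix_vector_mult_scaleR supp_def)
  have "e = (b \<bullet> e) *\<^sub>R d" if "B *v e = 0" "supp e \<subseteq> supp y" for e
  proof -
    have "supp (e - (b \<bullet> e) *\<^sub>R d) \<subseteq> supp y"
      using that(2) d(2) supp_diff_subset supp_scaleR_subset by blast
    then have "e - (b \<bullet> e) *\<^sub>R d = 0"
      using that d by (intro Rpoly_vertex_kernel_zero[OF vertex])
        (simp_all add: matrix_vector_mult_diff_distrib matrix_vector_mult_scaleR inner_diff_right)
    then show ?thesis
      by simp
  qed
  with d show ?thesis
    using that by blast
next
  case False
  then have "e = (b \<bullet> e) *\<^sub>R 0" if "B *v e = 0" "supp e \<subseteq> supp y" for e
    using that Rpoly_vertex_kernel_zero[OF vertex] by auto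
  then show ?thesis
    using that[of 0] by (simp add: supp_def)
qed

lemma convex_Band_x: "convex (Band_x b B cB ca cb y)"
  unfolding convex_alt
proof (intro ballI allI impI)
  fix t1 t2 u :: real
  assume "t1 \<in> Band_x b B cB ca cb y" "t2 \<in> Band_x b B cB ca cb y" and u: "0 \<le> u \<and> u \<le> 1"
  then obtain z1 z2 where z: "t1 = ca + cb - b \<bullet> z1" "B *v z1 = cB" "supp z1 \<subseteq> supp y" "nonneg z1"
      "t2 = ca + cb - b \<bullet> z2" "B *v z2 = cB" "supp z2 \<subseteq> supp y" "nonneg z2"
    by (auto simp: Band_x_def)
  define z where "z = (1 - u) *\<^sub>R z1 + u *\<^sub>R z2"
  have "B *v z = cB"
    using z by (simp add: z_def matrix_vector_right_distrib matrix_vector_mult_scaleR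
        flip: scaleR_add_left)
  moreover have "supp z \<subseteq> supp y"
    using z supp_add_subset supp_scaleR_subset unfolding z_def by blast
  moreover have "nonneg z"
    using z u by (simp add: z_def nonneg_def)
  moreover have "(1 - u) *\<^sub>R t1 + u *\<^sub>R t2 = ca + cb - b \<bullet> z"
    unfolding z(1,5) z_def by (simp add: inner_add_right algebra_simps)
  ultimately show "(1 - u) *\<^sub>R t1 + u *\<^sub>R t2 \<in> Band_x b B cB ca cb y"
    by (auto simp: Band_x_def)
qed

(* At a vertex the kernel directions supported in supp y form at most a line, so the band is
   cut out by finitely many closed conditions on a single parameter. *)

lemma closed_Band_x:
  assumes vertex: "vertex_of (x, y) (Rpoly A a b B cA cB ca cb)"
  shows "closed (Band_x b B cB ca cb y)"
proof -
  obtain d where d: "B *v d = 0" "supp d \<subseteq> supp y"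
      and line: "\<And>e. B *v e = 0 \<Longrightarrow> supp e \<subseteq> supp y \<Longrightarrow> e = (b \<bullet> e) *\<^sub>R d"
    using Rpoly_vertex_kernel_line[OF vertex] by blast
  have y: "B *v y = cB" "nonneg y"
    using vertex_of_in[OF vertex] by (simp_all add: Rpoly_def)
  define g where "g = ca + cb - b \<bullet> y"
  have "Band_x b B cB ca cb y = {t. nonneg (y + (g - t) *\<^sub>R d) \<and> (g - t) * (b \<bullet> d) = g - t}"
  proof (intro set_eqI iffI)
    fix t assume "t \<in> Band_x b B cB ca cb y"
    then obtain z where z: "t = ca + cb - b \<bullet> z" "B *v z = cB" "supp z \<subseteq> supp y" "nonneg z"
      by (auto simp: Band_x_def)
    have "z - y = (b \<bullet> (z - y)) *\<^sub>R d"
      using z y supp_diff_subset by (intro line) (auto simp: matrix_vector_mult_diff_distrib)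
    moreover have "b \<bullet> (z - y) = g - t"
      using z by (simp add: g_def inner_diff_right)
    ultimately have "z = y + (g - t) *\<^sub>R d" "g - t = (g - t) * (b \<bullet> d)"
      by (metis add.commute diff_add_cancel, metis inner_scaleR_right)
    then show "t \<in> {t. nonneg (y + (g - t) *\<^sub>R d) \<and> (g - t) * (b \<bullet> d) = g - t}"
      using z(4) by simp
  next
    fix t assume "t \<in> {t. nonneg (y + (g - t) *\<^sub>R d) \<and> (g - t) * (b \<bullet> d) = g - t}"
    then have t: "nonneg (y + (g - t) *\<^sub>R d)" "(g - t) * (b \<bullet> d) = g - t"
      by simp_all
    have "B *v (y + (g - t) *\<^sub>R d) = cB"
      using y d by (simp add: matrix_vector_right_distrib matrix_vector_mult_scaleR)
    moreover have "supp (y + (g - t) *\<^sub>R d) \<subseteq> supp y"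
      using d(2) supp_add_subset supp_scaleR_subset by blast
    moreover have "b \<bullet> (y + (g - t) *\<^sub>R d) = b \<bullet> y + (g - t)"
      using t(2) by (simp add: inner_add_right)
    then have "t = ca + cb - b \<bullet> (y + (g - t) *\<^sub>R d)"
      by (simp add: g_def)
    ultimately show "t \<in> Band_x b B cB ca cb y"
      using t(1) by (auto simp: Band_x_def)
  qed
  also have "closed \<dots>"
    unfolding nonneg_def
    by (intro closed_Collect_conj closed_Collect_all closed_Collect_le closed_Collect_eq
        continuous_intros)
  finally show ?thesis .
qed

lemma Rpoly_supp_snd_face:
  assumes vertex: "vertex_of (x, y) (Rpoly A a b B cA cB ca cb)"
  defines "H \<equiv> {q \<in> Rpoly A a b B cA cB ca cb. supp (snd q) \<subseteq> supp y}"
  shows "H face_of Rpoly A a b B cA cB ca cb" "inj_on fst H"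
    "fst ` H = slab (std_poly A cA) a (Band_x b B cB ca cb y)"
proof -
  show "H face_of Rpoly A a b B cA cB ca cb"
    unfolding H_def
    by (rule face_of_supp_subset[OF bounded_linear.linear[OF bounded_linear_snd] convex_Rpoly])
       (auto simp: Rpoly_def)
  show "inj_on fst H"
  proof (rule inj_onI)
    fix q q' assume "q \<in> H" "q' \<in> H" "fst q = fst q'"
    then obtain u w w' where q: "q = (u, w)" "q' = (u, w')" "(u, w) \<in> H" "(u, w') \<in> H"
      by (metis prod.collapse)
    then have "B *v (w - w') = 0" "supp (w - w') \<subseteq> supp y" "b \<bullet> (w - w') = 0"
      using supp_diff_subset[of w w']
      by (auto simp: H_def Rpoly_def matrix_vector_mult_diff_distrib inner_diff_right)
    then have "w - w' = 0"
      by (rule Rpoly_vertex_kernel_zero[OF vertex])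
    then show "q = q'"
      using q by simp
  qed
  show "fst ` H = slab (std_poly A cA) a (Band_x b B cB ca cb y)"
  proof (intro set_eqI iffI)
    fix u assume "u \<in> fst ` H"
    then obtain w where "(u, w) \<in> H"
      by force
    then have "A *v u = cA" "nonneg u" "a \<bullet> u = ca + cb - b \<bullet> w"
        "B *v w = cB" "supp w \<subseteq> supp y" "nonneg w"
      by (simp_all add: H_def Rpoly_def algebra_simps)
    then show "u \<in> slab (std_poly A cA) a (Band_x b B cB ca cb y)"
      unfolding slab_def std_poly_def Band_x_def by blast
  next
    fix u assume "u \<in> slab (std_poly A cA) a (Band_x b B cB ca cb y)"
    then obtain w where "A *v u = cA" "nonneg u" "a \<bullet> u = ca + cb - b \<bullet> w"
        "B *v w = cB" "supp w \<subseteq> supp y" "nonneg w"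
      unfolding slab_def std_poly_def Band_x_def by blast
    then have "(u, w) \<in> H"
      by (simp add: H_def Rpoly_def)
    then show "u \<in> fst ` H"
      by force
  qed
qed

lemma Rpoly_supp_fst_face:
  assumes x': "vertex_of x' (std_poly A cA)"
  defines "G \<equiv> {q \<in> Rpoly A a b B cA cB ca cb. supp (fst q) \<subseteq> supp x'}"
  shows "G face_of Rpoly A a b B cA cB ca cb" "inj_on snd G"
    "snd ` G = std_poly (stack_row B b) (stack_scalar (ca + cb - a \<bullet> x') cB)"
proof -
  show "G face_of Rpoly A a b B cA cB ca cb"
    unfolding G_def
    by (rule face_of_supp_subset[OF bounded_linear.linear[OF bounded_linear_fst] convex_Rpoly])
       (auto simp: Rpoly_def)
  have G_fst: "fst q = x'" if "q \<in> G" for q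
    using that by (intro vertex_of_std_poly_supp_unique[OF x'])
      (auto simp: G_def Rpoly_def std_poly_def)
  then show "inj_on snd G"
    by (metis inj_onI prod.expand)
  have "x' \<in> std_poly A cA"
    using x' by (rule vertex_of_in)
  show "snd ` G = std_poly (stack_row B b) (stack_scalar (ca + cb - a \<bullet> x') cB)"
    unfolding std_poly_stack_row
  proof (intro set_eqI iffI)
    fix w assume "w \<in> snd ` G"
    then obtain u where "(u, w) \<in> G"
      by force
    moreover from this have "u = x'"
      using G_fst by force
    ultimately show "w \<in> {z \<in> std_poly B cB. b \<bullet> z = ca + cb - a \<bullet> x'}"
      by (simp add: G_def Rpoly_def std_poly_def)
  next
    fix w assume "w \<in> {z \<in> std_poly B cB. b \<bullet> z = ca + cb - a \<bullet> x'}"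
    then have "(x', w) \<in> G"
      using \<open>x' \<in> std_poly A cA\<close> by (simp add: G_def Rpoly_def std_poly_def)
    then show "w \<in> snd ` G"
      by force
  qed
qed

lemma edge_dist_Rpoly_change_x:
  assumes vertex: "vertex_of (x, y) (Rpoly A a b B cA cB ca cb)"
    and x: "vertex_of x (std_poly A cA)" and x': "vertex_of x' (std_poly A cA)"
    and band: "a \<bullet> x' \<in> Band_x b B cB ca cb y"
  obtains z where "vertex_of (x', z) (Rpoly A a b B cA cB ca cb)"
    "edge_dist (Rpoly A a b B cA cB ca cb) (x, y) (x', z)
       \<le> comb_diam (std_poly A cA) + 2 * mat_diam (stack_row A a)"
proof -
  define R where "R = Rpoly A a b B cA cB ca cb"
  define H where "H = {q \<in> R. supp (snd q) \<subseteq> supp y}"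
  define S where "S = slab (std_poly A cA) a (Band_x b B cB ca cb y)"
  have H: "H face_of R" "inj_on fst H" "fst ` H = S"
    using Rpoly_supp_snd_face[OF vertex] by (simp_all add: H_def R_def S_def)
  have "convex H"
    using face_of_imp_convex[OF H(1)] .
  have "(x, y) \<in> H"
    using vertex_of_in[OF vertex] by (simp add: H_def R_def)
  then have "x \<in> S"
    using H(3) by (metis fst_conv image_eqI)
  have "x' \<in> S"
    using vertex_of_in[OF x'] band by (simp add: slab_def S_def)
  then obtain z where "(x', z) \<in> H"
    using H(3) by force
  have "vertex_of x' S"
    using x' \<open>x' \<in> S\<close> by (rule vertex_of_subset) (auto simp: S_def slab_def)
  then have "vertex_of (x', z) H"
    using vertex_of_linear_image_iff[OF bounded_linear.linear[OF bounded_linear_fst] H(2)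
        \<open>convex H\<close> \<open>(x', z) \<in> H\<close>] H(3) by simp
  then have "vertex_of (x', z) R"
    using vertex_of_face_iff[OF H(1) \<open>(x', z) \<in> H\<close>] by simp
  have "edge_dist R (x, y) (x', z) \<le> edge_dist H (x, y) (x', z)"
    by (rule edge_dist_face_le[OF H(1)])
  also have "\<dots> \<le> edge_dist S x x'"
    using edge_dist_le_linear_image[OF bounded_linear.linear[OF bounded_linear_fst] H(2)
        \<open>convex H\<close> \<open>(x, y) \<in> H\<close> \<open>(x', z) \<in> H\<close>] H(3) by simp
  also have "\<dots> \<le> edge_dist (std_poly A cA) x x' + 2 * mat_diam (stack_row A a)"
    unfolding S_def
  proof (rule convex_slab.edge_dist_slab_le)
    show "convex_slab (std_poly A cA) (Band_x b B cB ca cb y)"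
      using convex_std_poly convex_Band_x closed_Band_x[OF vertex] by unfold_locales
    show "a \<bullet> x \<in> Band_x b B cB ca cb y" "a \<bullet> x' \<in> Band_x b B cB ca cb y"
      using \<open>x \<in> S\<close> \<open>x' \<in> S\<close> by (simp_all add: S_def slab_def)
    show "comb_diam (std_poly A cA \<inter> {u. a \<bullet> u = g}) \<le> mat_diam (stack_row A a)" for g
      using comb_diam_std_poly_le_mat_diam[of "stack_row A a" "stack_scalar g cA"]
      by (simp add: std_poly_stack_row Int_def)
  qed
  also have "\<dots> \<le> comb_diam (std_poly A cA) + 2 * mat_diam (stack_row A a)"
    using edge_dist_le_comb_diam[OF x x'] by (rule add_right_mono)
  finally show ?thesis
    using that \<open>vertex_of (x', z) R\<close> by (simp add: R_def)
qed

lemma edge_dist_Rpoly_change_y: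
  assumes x': "vertex_of x' (std_poly A cA)"
    and z: "vertex_of (x', z) (Rpoly A a b B cA cB ca cb)"
    and y': "vertex_of (x', y') (Rpoly A a b B cA cB ca cb)"
  shows "edge_dist (Rpoly A a b B cA cB ca cb) (x', z) (x', y') \<le> mat_diam (stack_row B b)"
proof -
  define R where "R = Rpoly A a b B cA cB ca cb"
  define G where "G = {q \<in> R. supp (fst q) \<subseteq> supp x'}"
  define Q where "Q = std_poly (stack_row B b) (stack_scalar (ca + cb - a \<bullet> x') cB)"
  have G: "G face_of R" "inj_on snd G" "snd ` G = Q"
    using Rpoly_supp_fst_face[OF x'] by (simp_all add: G_def R_def Q_def)
  have "convex G"
    using face_of_imp_convex[OF G(1)] .
  have in_G: "(x', z) \<in> G" "(x', y') \<in> G"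
    using vertex_of_in[OF z] vertex_of_in[OF y'] by (simp_all add: G_def R_def)
  have vertex_Q: "vertex_of w Q" if "(x', w) \<in> G" "vertex_of (x', w) R" for w
    using that vertex_of_face_iff[OF G(1)] G(3)
      vertex_of_linear_image_iff[OF bounded_linear.linear[OF bounded_linear_snd] G(2) \<open>convex G\<close>,
        of "(x', w)"]
    by simp
  have "edge_dist R (x', z) (x', y') \<le> edge_dist G (x', z) (x', y')"
    by (rule edge_dist_face_le[OF G(1)])
  also have "\<dots> \<le> edge_dist Q z y'"
    using edge_dist_le_linear_image[OF bounded_linear.linear[OF bounded_linear_snd] G(2)
        \<open>convex G\<close> in_G] G(3) by simp
  also have "\<dots> \<le> comb_diam Q"
    using in_G z y' by (intro edge_dist_le_comb_diam vertex_Q) (simp_all add: R_def)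
  also have "\<dots> \<le> mat_diam (stack_row B b)"
    unfolding Q_def by (rule comb_diam_std_poly_le_mat_diam)
  finally show ?thesis
    by (simp add: R_def)
qed
end

theorem lemma5:
  fixes A :: "real ^ 'n1 ^ 'm1" and a :: "real ^ 'n1"
    and b :: "real ^ 'n2" and B :: "real ^ 'n2 ^ 'm2"
    and cA :: "real ^ 'm1" and cB :: "real ^ 'm2" and ca cb :: real
    and x x' :: "real ^ 'n1" and y y' :: "real ^ 'n2"
  assumes "a \<noteq> 0" and "b \<noteq> 0"
    and "simple_polyhedron (Rpoly A a b B cA cB ca cb)"
    and "x_vertex (Rpoly A a b B cA cB ca cb) A cA (x, y)"
    and "x_vertex (Rpoly A a b B cA cB ca cb) A cA (x', y')"
    and "a \<bullet> x' \<in> Band_x b B cB ca cb y"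
  shows "edge_dist (Rpoly A a b B cA cB ca cb) (x, y) (x', y')
         \<le> comb_diam (std_poly A cA) + 2 * mat_diam (stack_row A a)
           + mat_diam (stack_row B b) + 2"
proof -
  let ?R = "Rpoly A a b B cA cB ca cb"
  have xy: "vertex_of (x, y) ?R" "vertex_of x (std_poly A cA)"
    and xy': "vertex_of (x', y') ?R" "vertex_of x' (std_poly A cA)"
    using assms(4,5) by (simp_all add: x_vertex_def)
  obtain z where z: "vertex_of (x', z) ?R"
    and change_x: "edge_dist ?R (x, y) (x', z)
      \<le> comb_diam (std_poly A cA) + 2 * mat_diam (stack_row A a)"
    using edge_dist_Rpoly_change_x[OF xy xy'(2) assms(6)] .
  have change_y: "edge_dist ?R (x', z) (x', y') \<le> mat_diam (stack_row B b)"
    by (rule edge_dist_Rpoly_change_y[OF xy'(2) z xy'(1)])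
  have "edge_dist ?R (x, y) (x', y') \<le> edge_dist ?R (x, y) (x', z) + edge_dist ?R (x', z) (x', y')"
    by (rule edge_dist_triangle)
  also have "\<dots> \<le> comb_diam (std_poly A cA) + 2 * mat_diam (stack_row A a)
      + mat_diam (stack_row B b)"
    using change_x change_y by (rule add_mono)
  also have "\<dots> \<le> comb_diam (std_poly A cA) + 2 * mat_diam (stack_row A a)
      + mat_diam (stack_row B b) + 2"
    by simp
  finally show ?thesis .
qed

end
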